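(* Let $(\mathcal{C},\mathbb{E},\mathfrak{s})$ be an extriangulated category with enough projective morphisms, and let $\mathbb{F}\subseteq\mathbb{E}$ be an additive subfunctor having enough injective morphisms. Then $\mathrm{Ph}(\mathbb{F})$ is a special precovering ideal.
   Context: An extriangulated category $(\mathcal{C},\mathbb{E},\mathfrak{s})$ (Nakaoka–Palu): additive $\mathcal{C}$, biadditive $\mathbb{E}:\mathcal{C}^{\mathrm{op}}\times\mathcal{C}\to\mathrm{Ab}$, additive realization $\mathfrak{s}$ assigning to each $\delta\in\mathbb{E}(C,A)$ an equivalence class of sequences $A\to B\to C$, forming $\mathbb{E}$-triangles $A\to B\to C\overset{\delta}{\dashrightarrow}$, satisfying (ET1)–(ET4), (ET3)$^{\mathrm{op}}$, (ET4)$^{\mathrm{op}}$. Notation: $a_\star\delta=\mathbb{E}(C,a)(\delta)$, $c^\star\delta=\mathbb{E}(c,A)(\delta)$. A morphism of $\mathbb{E}$-triangles from $A\to B\to C\overset{\delta}{\dashrightarrow}$ to $A'\to B'\to C'\overset{\delta'}{\dashrightarrow}$ is $(a,b,c)$ making the diagram commute with $a_\star\delta=c^\star\delta'$. Additive subfunctor $\mathbb{F}$: subgroups $\mathbb{F}(C,A)\subseteq\mathbb{E}(C,A)$ stable under $a_\star,c^\star$; $\mathbb{F}$-triangles have extension in $\mathbb{F}$. $\mathrm{Ph}(\mathbb{F})$: morphisms $\varphi:X\to C$ with $\varphi^\star\delta\in\mathbb{F}(X,A)$ for all $\delta\in\mathbb{E}(C,A)$ (an ideal). $\mathbb{F}\text{-}\mathrm{inj}$: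 morphisms $i:A\to Y$ with $i_\star\delta=0$ for all $\delta\in\mathbb{F}(C,A)$. $\mathbb{F}$ has enough injective morphisms if every $A$ admits an $\mathbb{F}$-triangle $A\xrightarrow{e}B\to C\overset{\delta}{\dashrightarrow}$ with $e\in\mathbb{F}\text{-}\mathrm{inj}$. $\mathcal{C}$ has enough projective morphisms if every $C$ admits an $\mathbb{E}$-triangle $K\to P\xrightarrow{p}C\overset{\gamma}{\dashrightarrow}$ with $p^\star\delta=0$ for all $\delta\in\mathbb{E}(C,A)$, all $A$. For an ideal $\mathcal{I}$, $\mathcal{I}^{\perp_{\mathbb{E}}}=\{g:A\to Y\mid m^\star g_\star\delta=0\ \forall m\in\mathcal{I},\,m:X\to C,\ \forall\delta\in\mathbb{E}(C,A)\}$. A special $\mathcal{I}$-precover of $C$ is $i:X\to C$ in $\mathcal{I}$ with $\mathbb{E}$-triangles $A\to B\to C\overset{\delta}{\dashrightarrow}$, $A'\to X\xrightarrow{i}C\overset{\delta'}{\dashrightarrow}$ and a morphism $(j,b,\mathrm{id}_C)$ between them with $j\in\mathcal{I}^{\perp_{\mathbb{E}}}$; $\mathcal{I}$ is special precovering if every object has one. *)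

theory Defs
  imports Main
begin

text \<open>Objects have type 'o, morphisms type 'm, extensions type 'e.
  cmp X g f is the composite g o f.  push X C a d is a_* d for d in E(C,A), a : A -> A'.
  pull X c A d is c^* d for d in E(C,A), c : C' -> C.
  rlz X C A d x y means that the sequence A -x-> B -y-> C belongs to the class s(d).\<close>

record ('o,'m,'e) ecat =
  Ob :: "'o set"
  Mor :: "'m set"
  src :: "'m \<Rightarrow> 'o"
  tgt :: "'m \<Rightarrow> 'o"
  cmp :: "'m \<Rightarrow> 'm \<Rightarrow> 'm"
  idt :: "'o \<Rightarrow> 'm"
  madd :: "'m \<Rightarrow> 'm \<Rightarrow> 'm"
  mzero :: "'o \<Rightarrow> 'o \<Rightarrow> 'm"
  Ext :: "'o \<Rightarrow> 'o \<Rightarrow> 'e set"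
  eadd :: "'o \<Rightarrow> 'o \<Rightarrow> 'e \<Rightarrow> 'e \<Rightarrow> 'e"
  ezero :: "'o \<Rightarrow> 'o \<Rightarrow> 'e"
  push :: "'o \<Rightarrow> 'm \<Rightarrow> 'e \<Rightarrow> 'e"
  pull :: "'m \<Rightarrow> 'o \<Rightarrow> 'e \<Rightarrow> 'e"
  rlz :: "'o \<Rightarrow> 'o \<Rightarrow> 'e \<Rightarrow> 'm \<Rightarrow> 'm \<Rightarrow> bool"

definition hom :: "('o,'m,'e) ecat \<Rightarrow> 'o \<Rightarrow> 'o \<Rightarrow> 'm set" where
  "hom X A B = {f \<in> Mor X. src X f = A \<and> tgt X f = B}"

definition is_iso :: "('o,'m,'e) ecat \<Rightarrow> 'o \<Rightarrow> 'o \<Rightarrow> 'm \<Rightarrow> bool" where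
  "is_iso X A B f \<longleftrightarrow> f \<in> hom X A B \<and>
     (\<exists>g\<in>hom X B A. cmp X g f = idt X A \<and> cmp X f g = idt X B)"

definition category :: "('o,'m,'e) ecat \<Rightarrow> bool" where
  "category X \<longleftrightarrow>
     (\<forall>f\<in>Mor X. src X f \<in> Ob X \<and> tgt X f \<in> Ob X) \<and>
     (\<forall>A\<in>Ob X. idt X A \<in> hom X A A) \<and>
     (\<forall>A B C. \<forall>f\<in>hom X A B. \<forall>g\<in>hom X B C. cmp X g f \<in> hom X A C) \<and>
     (\<forall>A B C D. \<forall>f\<in>hom X A B. \<forall>g\<in>hom X B C. \<forall>h\<in>hom X C D.
        cmp X h (cmp X g f) = cmp X (cmp X h g) f) \<and>
     (\<forall>A B. \<forall>f\<in>hom X A B. cmp X (idt X B) f = f \<and> cmp X f (idt X A) = f)"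

definition preadditive :: "('o,'m,'e) ecat \<Rightarrow> bool" where
  "preadditive X \<longleftrightarrow> category X \<and>
     (\<forall>A\<in>Ob X. \<forall>B\<in>Ob X.
        mzero X A B \<in> hom X A B \<and>
        (\<forall>f\<in>hom X A B. \<forall>g\<in>hom X A B. madd X f g \<in> hom X A B) \<and>
        (\<forall>f\<in>hom X A B. \<forall>g\<in>hom X A B. \<forall>h\<in>hom X A B.
           madd X (madd X f g) h = madd X f (madd X g h)) \<and>
        (\<forall>f\<in>hom X A B. \<forall>g\<in>hom X A B. madd X f g = madd X g f) \<and>
        (\<forall>f\<in>hom X A B. madd X (mzero X A B) f = f) \<and>
        (\<forall>f\<in>hom X A B. \<exists>g\<in>hom X A B. madd X f g = mzero X A B)) \<and>
     (\<forall>A B C. \<forall>f\<in>hom X A B. \<forall>f'\<in>hom X A B. \<forall>g\<in>hom X B C.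
        cmp X g (madd X f f') = madd X (cmp X g f) (cmp X g f')) \<and>
     (\<forall>A B C. \<forall>f\<in>hom X A B. \<forall>g\<in>hom X B C. \<forall>g'\<in>hom X B C.
        cmp X (madd X g g') f = madd X (cmp X g f) (cmp X g' f))"

definition biproduct :: "('o,'m,'e) ecat \<Rightarrow> 'o \<Rightarrow> 'o \<Rightarrow> 'o \<Rightarrow> 'm \<Rightarrow> 'm \<Rightarrow> 'm \<Rightarrow> 'm \<Rightarrow> bool" where
  "biproduct X A B S p1 p2 i1 i2 \<longleftrightarrow> S \<in> Ob X \<and>
     p1 \<in> hom X S A \<and> p2 \<in> hom X S B \<and> i1 \<in> hom X A S \<and> i2 \<in> hom X B S \<and>
     cmp X p1 i1 = idt X A \<and> cmp X p2 i2 = idt X B \<and>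
     cmp X p2 i1 = mzero X A B \<and> cmp X p1 i2 = mzero X B A \<and>
     madd X (cmp X i1 p1) (cmp X i2 p2) = idt X S"

definition additive :: "('o,'m,'e) ecat \<Rightarrow> bool" where
  "additive X \<longleftrightarrow> preadditive X \<and>
     (\<exists>Z\<in>Ob X. \<forall>A\<in>Ob X. (\<exists>!f. f \<in> hom X Z A) \<and> (\<exists>!f. f \<in> hom X A Z)) \<and>
     (\<forall>A\<in>Ob X. \<forall>B\<in>Ob X. \<exists>S p1 p2 i1 i2. biproduct X A B S p1 p2 i1 i2)"

definition biadditive_Ext :: "('o,'m,'e) ecat \<Rightarrow> bool" where
  "biadditive_Ext X \<longleftrightarrow>
     (\<forall>C\<in>Ob X. \<forall>A\<in>Ob X.
        ezero X C A \<in> Ext X C A \<and>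
        (\<forall>d\<in>Ext X C A. \<forall>d'\<in>Ext X C A. eadd X C A d d' \<in> Ext X C A) \<and>
        (\<forall>d\<in>Ext X C A. \<forall>d'\<in>Ext X C A. \<forall>d''\<in>Ext X C A.
           eadd X C A (eadd X C A d d') d'' = eadd X C A d (eadd X C A d' d'')) \<and>
        (\<forall>d\<in>Ext X C A. \<forall>d'\<in>Ext X C A. eadd X C A d d' = eadd X C A d' d) \<and>
        (\<forall>d\<in>Ext X C A. eadd X C A (ezero X C A) d = d) \<and>
        (\<forall>d\<in>Ext X C A. \<exists>d'\<in>Ext X C A. eadd X C A d d' = ezero X C A)) \<and>
     (\<forall>C\<in>Ob X. \<forall>A A'. \<forall>a\<in>hom X A A'. \<forall>d\<in>Ext X C A.
        push X C a d \<in> Ext X C A' \<and>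
        (\<forall>d'\<in>Ext X C A. push X C a (eadd X C A d d') = eadd X C A' (push X C a d) (push X C a d')) \<and>
        (\<forall>b\<in>hom X A A'. push X C (madd X a b) d = eadd X C A' (push X C a d) (push X C b d)) \<and>
        (\<forall>A''. \<forall>a'\<in>hom X A' A''. push X C (cmp X a' a) d = push X C a' (push X C a d))) \<and>
     (\<forall>C\<in>Ob X. \<forall>A\<in>Ob X. \<forall>d\<in>Ext X C A. push X C (idt X A) d = d) \<and>
     (\<forall>A\<in>Ob X. \<forall>C C'. \<forall>c\<in>hom X C' C. \<forall>d\<in>Ext X C A.
        pull X c A d \<in> Ext X C' A \<and>
        (\<forall>d'\<in>Ext X C A. pull X c A (eadd X C A d d') = eadd X C' A (pull X c A d) (pull X c A d')) \<and>
        (\<forall>c'\<in>hom X C' C. pull X (madd X c c') A d = eadd X C' A (pull X c A d) (pull X c' A d)) \<and>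
        (\<forall>C''. \<forall>c'\<in>hom X C'' C'. pull X (cmp X c c') A d = pull X c' A (pull X c A d))) \<and>
     (\<forall>C\<in>Ob X. \<forall>A\<in>Ob X. \<forall>d\<in>Ext X C A. pull X (idt X C) A d = d) \<and>
     (\<forall>A A' C C'. \<forall>a\<in>hom X A A'. \<forall>c\<in>hom X C' C. \<forall>d\<in>Ext X C A.
        push X C' a (pull X c A d) = pull X c A' (push X C a d))"

definition seq_equiv :: "('o,'m,'e) ecat \<Rightarrow> 'm \<Rightarrow> 'm \<Rightarrow> 'm \<Rightarrow> 'm \<Rightarrow> bool" where
  "seq_equiv X x y x' y' \<longleftrightarrow>
     (\<exists>b. is_iso X (tgt X x) (tgt X x') b \<and> cmp X b x = x' \<and> cmp X y' b = y)"

definition realization :: "('o,'m,'e) ecat \<Rightarrow> bool" where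
  "realization X \<longleftrightarrow>
     (\<forall>C A d x y. rlz X C A d x y \<longrightarrow> C \<in> Ob X \<and> A \<in> Ob X \<and> d \<in> Ext X C A \<and>
        (\<exists>B\<in>Ob X. x \<in> hom X A B \<and> y \<in> hom X B C)) \<and>
     (\<forall>C\<in>Ob X. \<forall>A\<in>Ob X. \<forall>d\<in>Ext X C A.
        (\<exists>x y. rlz X C A d x y) \<and>
        (\<forall>x y x' y'. rlz X C A d x y \<and> rlz X C A d x' y' \<longrightarrow> seq_equiv X x y x' y') \<and>
        (\<forall>x y x' y'. rlz X C A d x y \<and> (\<exists>B'\<in>Ob X. x' \<in> hom X A B' \<and> y' \<in> hom X B' C) \<and>
            seq_equiv X x y x' y' \<longrightarrow> rlz X C A d x' y')) \<and>
     (\<forall>A C A' C' d d' a c x y x' y'.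
        d \<in> Ext X C A \<and> d' \<in> Ext X C' A' \<and> a \<in> hom X A A' \<and> c \<in> hom X C C' \<and>
        push X C a d = pull X c A' d' \<and> rlz X C A d x y \<and> rlz X C' A' d' x' y' \<longrightarrow>
        (\<exists>b\<in>hom X (tgt X x) (tgt X x'). cmp X b x = cmp X x' a \<and> cmp X y' b = cmp X c y))"

definition ET2 :: "('o,'m,'e) ecat \<Rightarrow> bool" where
  "ET2 X \<longleftrightarrow>
     (\<forall>A\<in>Ob X. \<forall>C\<in>Ob X. \<forall>S p1 p2 i1 i2.
        biproduct X A C S p1 p2 i1 i2 \<longrightarrow> rlz X C A (ezero X C A) i1 p2) \<and>
     (\<forall>A A' C C' d d' SA pA1 pA2 iA1 iA2 SC pC1 pC2 iC1 iC2 th x y x' y' SB pB1 pB2 iB1 iB2.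
        A \<in> Ob X \<and> A' \<in> Ob X \<and> C \<in> Ob X \<and> C' \<in> Ob X \<and>
        d \<in> Ext X C A \<and> d' \<in> Ext X C' A' \<and>
        biproduct X A A' SA pA1 pA2 iA1 iA2 \<and> biproduct X C C' SC pC1 pC2 iC1 iC2 \<and>
        th \<in> Ext X SC SA \<and>
        push X C pA1 (pull X iC1 SA th) = d \<and>
        push X C' pA2 (pull X iC2 SA th) = d' \<and>
        push X C pA2 (pull X iC1 SA th) = ezero X C A' \<and>
        push X C' pA1 (pull X iC2 SA th) = ezero X C' A \<and>
        rlz X C A d x y \<and> rlz X C' A' d' x' y' \<and>
        biproduct X (tgt X x) (tgt X x') SB pB1 pB2 iB1 iB2 \<longrightarrow>
        rlz X SC SA th
          (madd X (cmp X iB1 (cmp X x pA1)) (cmp X iB2 (cmp X x' pA2)))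
          (madd X (cmp X iC1 (cmp X y pB1)) (cmp X iC2 (cmp X y' pB2))))"

definition etri :: "('o,'m,'e) ecat \<Rightarrow> 'o \<Rightarrow> 'o \<Rightarrow> 'o \<Rightarrow> 'm \<Rightarrow> 'm \<Rightarrow> 'e \<Rightarrow> bool" where
  "etri X A B C x y d \<longleftrightarrow> A \<in> Ob X \<and> B \<in> Ob X \<and> C \<in> Ob X \<and> d \<in> Ext X C A \<and>
     x \<in> hom X A B \<and> y \<in> hom X B C \<and> rlz X C A d x y"

definition ET3 :: "('o,'m,'e) ecat \<Rightarrow> bool" where
  "ET3 X \<longleftrightarrow> (\<forall>A B C x y d A' B' C' x' y' d' a b.
     etri X A B C x y d \<and> etri X A' B' C' x' y' d' \<and> a \<in> hom X A A' \<and> b \<in> hom X B B' \<and>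
     cmp X b x = cmp X x' a \<longrightarrow>
     (\<exists>c\<in>hom X C C'. cmp X c y = cmp X y' b \<and> push X C a d = pull X c A' d'))"

definition ET3op :: "('o,'m,'e) ecat \<Rightarrow> bool" where
  "ET3op X \<longleftrightarrow> (\<forall>A B C x y d A' B' C' x' y' d' b c.
     etri X A B C x y d \<and> etri X A' B' C' x' y' d' \<and> b \<in> hom X B B' \<and> c \<in> hom X C C' \<and>
     cmp X y' b = cmp X c y \<longrightarrow>
     (\<exists>a\<in>hom X A A'. cmp X b x = cmp X x' a \<and> push X C a d = pull X c A' d'))"

definition ET4 :: "('o,'m,'e) ecat \<Rightarrow> bool" where
  "ET4 X \<longleftrightarrow> (\<forall>A B D f f' d C F g g' d'.
     etri X A B D f f' d \<and> etri X B C F g g' d' \<longrightarrow>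
     (\<exists>E\<in>Ob X. \<exists>h h' dd e d''.
        etri X A C E h h' d'' \<and> dd \<in> hom X D E \<and> e \<in> hom X E F \<and>
        h = cmp X g f \<and> cmp X dd f' = cmp X h' g \<and> cmp X e h' = g' \<and>
        etri X D E F dd e (push X F f' d') \<and>
        pull X dd A d'' = d \<and>
        push X E f d'' = pull X e B d'))"

definition ET4op :: "('o,'m,'e) ecat \<Rightarrow> bool" where
  "ET4op X \<longleftrightarrow> (\<forall>D A B f' f d F C g' g d'.
     etri X D A B f' f d \<and> etri X F B C g' g d' \<longrightarrow>
     (\<exists>E\<in>Ob X. \<exists>dd e h' h d''.
        etri X E A C h' h d'' \<and> dd \<in> hom X D E \<and> e \<in> hom X E F \<and>
        h = cmp X g f \<and> f' = cmp X h' dd \<and> cmp X g' e = cmp X f h' \<and>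
        etri X D E F dd e (pull X g' D d) \<and>
        d' = push X C e d'' \<and>
        push X B dd d = pull X g E d''))"

definition extriangulated :: "('o,'m,'e) ecat \<Rightarrow> bool" where
  "extriangulated X \<longleftrightarrow> additive X \<and> biadditive_Ext X \<and> realization X \<and> ET2 X \<and>
     ET3 X \<and> ET3op X \<and> ET4 X \<and> ET4op X"

definition additive_subfunctor :: "('o,'m,'e) ecat \<Rightarrow> ('o \<Rightarrow> 'o \<Rightarrow> 'e set) \<Rightarrow> bool" where
  "additive_subfunctor X Fs \<longleftrightarrow>
     (\<forall>C\<in>Ob X. \<forall>A\<in>Ob X. Fs C A \<subseteq> Ext X C A \<and> ezero X C A \<in> Fs C A \<and>
        (\<forall>d\<in>Fs C A. \<forall>d'\<in>Fs C A. eadd X C A d d' \<in> Fs C A) \<and>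
        (\<forall>d\<in>Fs C A. \<exists>d'\<in>Fs C A. eadd X C A d d' = ezero X C A)) \<and>
     (\<forall>C\<in>Ob X. \<forall>A A'. \<forall>a\<in>hom X A A'. \<forall>d\<in>Fs C A. push X C a d \<in> Fs C A') \<and>
     (\<forall>A\<in>Ob X. \<forall>C C'. \<forall>c\<in>hom X C' C. \<forall>d\<in>Fs C A. pull X c A d \<in> Fs C' A)"

definition Ph :: "('o,'m,'e) ecat \<Rightarrow> ('o \<Rightarrow> 'o \<Rightarrow> 'e set) \<Rightarrow> 'm set" where
  "Ph X Fs = {phi \<in> Mor X. \<forall>A\<in>Ob X. \<forall>d\<in>Ext X (tgt X phi) A.
     pull X phi A d \<in> Fs (src X phi) A}"

definition F_inj :: "('o,'m,'e) ecat \<Rightarrow> ('o \<Rightarrow> 'o \<Rightarrow> 'e set) \<Rightarrow> 'm set" where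
  "F_inj X Fs = {i \<in> Mor X. \<forall>C\<in>Ob X. \<forall>d\<in>Fs C (src X i).
     push X C i d = ezero X C (tgt X i)}"

definition enough_injective_morphisms :: "('o,'m,'e) ecat \<Rightarrow> ('o \<Rightarrow> 'o \<Rightarrow> 'e set) \<Rightarrow> bool" where
  "enough_injective_morphisms X Fs \<longleftrightarrow> (\<forall>A\<in>Ob X. \<exists>B C e y d.
     etri X A B C e y d \<and> d \<in> Fs C A \<and> e \<in> F_inj X Fs)"

definition enough_projective_morphisms :: "('o,'m,'e) ecat \<Rightarrow> bool" where
  "enough_projective_morphisms X \<longleftrightarrow> (\<forall>C\<in>Ob X. \<exists>K P k p g.
     etri X K P C k p g \<and> (\<forall>A\<in>Ob X. \<forall>d\<in>Ext X C A. pull X p A d = ezero X P A))"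

definition ideal :: "('o,'m,'e) ecat \<Rightarrow> 'm set \<Rightarrow> bool" where
  "ideal X I \<longleftrightarrow> I \<subseteq> Mor X \<and>
     (\<forall>A\<in>Ob X. \<forall>B\<in>Ob X. mzero X A B \<in> I) \<and>
     (\<forall>A B. \<forall>f\<in>hom X A B. \<forall>g\<in>hom X A B. f \<in> I \<and> g \<in> I \<longrightarrow> madd X f g \<in> I) \<and>
     (\<forall>f\<in>I. \<forall>g\<in>Mor X. src X g = tgt X f \<longrightarrow> cmp X g f \<in> I) \<and>
     (\<forall>f\<in>I. \<forall>g\<in>Mor X. tgt X g = src X f \<longrightarrow> cmp X f g \<in> I)"

definition perpE :: "('o,'m,'e) ecat \<Rightarrow> 'm set \<Rightarrow> 'm set" where
  "perpE X I = {g \<in> Mor X. \<forall>m\<in>I. \<forall>d\<in>Ext X (tgt X m) (src X g).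
     pull X m (tgt X g) (push X (tgt X m) g d) = ezero X (src X m) (tgt X g)}"

definition special_precover :: "('o,'m,'e) ecat \<Rightarrow> 'm set \<Rightarrow> 'o \<Rightarrow> 'm \<Rightarrow> bool" where
  "special_precover X I C i \<longleftrightarrow> i \<in> I \<and> tgt X i = C \<and>
     (\<exists>A B x y d A' x' d' j b.
        etri X A B C x y d \<and> etri X A' (src X i) C x' i d' \<and>
        j \<in> hom X A A' \<and> b \<in> hom X B (src X i) \<and>
        cmp X b x = cmp X x' j \<and> cmp X i b = cmp X (idt X C) y \<and>
        push X C j d = pull X (idt X C) A' d' \<and>
        j \<in> perpE X I)"

definition special_precovering_ideal :: "('o,'m,'e) ecat \<Rightarrow> 'm set \<Rightarrow> bool" where
  "special_precovering_ideal X I \<longleftrightarrow> ideal X I \<and> (\<forall>C\<in>Ob X. \<exists>i. special_precover X I C i)"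

end

theory Submission
  imports Defs
begin

(* Given C, take an E-triangle K -> P -p-> C with extension gamma whose deflation p is a
   projective morphism, and an F-triangle K -e-> B -> C' with extension delta whose inflation e is
   F-injective. Realize e_* gamma as B -> W -i-> C. Every theta in E(C,A) dies under p^*, hence is
   f_* gamma; and i^* gamma dies under e_*, hence is pulled back from delta and lies in F. So
   i^* theta = f_* i^* gamma lies in F, i.e. i is F-phantom. The morphism of triangles (e, b, id_C)
   exhibits i as a special precover, because e_* kills m^* d in F for every phantom m. *)

locale extriangulated_category =
  fixes X :: "('o,'m,'e) ecat"
  assumes extriangulated: "extriangulated X"
begin

lemma category: "category X"
  using extriangulated unfolding extriangulated_def additive_def preadditive_def by blast

lemma preadditive: "preadditive X"
  using extriangulated unfolding extriangulated_def additive_def by blast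

lemma biadditive: "biadditive_Ext X"
  using extriangulated unfolding extriangulated_def by blast

lemma realization: "realization X"
  using extriangulated unfolding extriangulated_def by blast

lemma hom_objects: "f \<in> hom X A B \<Longrightarrow> A \<in> Ob X \<and> B \<in> Ob X"
  using category unfolding category_def hom_def by blast

lemma idt_hom: "A \<in> Ob X \<Longrightarrow> idt X A \<in> hom X A A"
  using category unfolding category_def by blast

lemma cmp_hom: "f \<in> hom X A B \<Longrightarrow> g \<in> hom X B C \<Longrightarrow> cmp X g f \<in> hom X A C"
  using category unfolding category_def by blast

lemma cmp_assoc:
  "f \<in> hom X A B \<Longrightarrow> g \<in> hom X B C \<Longrightarrow> h \<in> hom X C D \<Longrightarrow>
   cmp X h (cmp X g f) = cmp X (cmp X h g) f"
  using category unfolding category_def by blast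

lemma cmp_idt_left: "f \<in> hom X A B \<Longrightarrow> cmp X (idt X B) f = f"
  using category unfolding category_def by blast

lemma cmp_idt_right: "f \<in> hom X A B \<Longrightarrow> cmp X f (idt X A) = f"
  using category unfolding category_def by blast

lemma mzero_hom: "A \<in> Ob X \<Longrightarrow> B \<in> Ob X \<Longrightarrow> mzero X A B \<in> hom X A B"
  using preadditive unfolding preadditive_def by blast

lemma madd_hom:
  assumes "f \<in> hom X A B" "g \<in> hom X A B"
  shows "madd X f g \<in> hom X A B"
proof -
  have "A \<in> Ob X" "B \<in> Ob X" using hom_objects[OF assms(1)] by auto
  then show ?thesis using preadditive assms unfolding preadditive_def
    by (elim conjE) (drule bspec, assumption, drule bspec, assumption, elim conjE, blast)
qed

lemma madd_mzero_left:
  assumes "f \<in> hom X A B"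
  shows "madd X (mzero X A B) f = f"
proof -
  have "A \<in> Ob X" "B \<in> Ob X" using hom_objects[OF assms] by auto
  then show ?thesis using preadditive assms unfolding preadditive_def
    by (elim conjE) (drule bspec, assumption, drule bspec, assumption, elim conjE, blast)
qed

lemma biproduct_exists: "A \<in> Ob X \<Longrightarrow> B \<in> Ob X \<Longrightarrow> \<exists>S p1 p2 i1 i2. biproduct X A B S p1 p2 i1 i2"
  using extriangulated unfolding extriangulated_def additive_def by blast

lemma Ext_abelian_group:
  "\<forall>C\<in>Ob X. \<forall>A\<in>Ob X.
     ezero X C A \<in> Ext X C A \<and>
     (\<forall>d\<in>Ext X C A. \<forall>d'\<in>Ext X C A. eadd X C A d d' \<in> Ext X C A) \<and>
     (\<forall>d\<in>Ext X C A. \<forall>d'\<in>Ext X C A. \<forall>d''\<in>Ext X C A.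
        eadd X C A (eadd X C A d d') d'' = eadd X C A d (eadd X C A d' d'')) \<and>
     (\<forall>d\<in>Ext X C A. \<forall>d'\<in>Ext X C A. eadd X C A d d' = eadd X C A d' d) \<and>
     (\<forall>d\<in>Ext X C A. eadd X C A (ezero X C A) d = d) \<and>
     (\<forall>d\<in>Ext X C A. \<exists>d'\<in>Ext X C A. eadd X C A d d' = ezero X C A)"
  using biadditive unfolding biadditive_Ext_def by (elim conjE) assumption

lemma ezero_in_Ext: "C \<in> Ob X \<Longrightarrow> A \<in> Ob X \<Longrightarrow> ezero X C A \<in> Ext X C A"
  using Ext_abelian_group by blast

lemma push_in_Ext: "C \<in> Ob X \<Longrightarrow> a \<in> hom X A A' \<Longrightarrow> d \<in> Ext X C A \<Longrightarrow> push X C a d \<in> Ext X C A'"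
  using biadditive unfolding biadditive_Ext_def by metis

lemma push_eadd:
  "C \<in> Ob X \<Longrightarrow> a \<in> hom X A A' \<Longrightarrow> d \<in> Ext X C A \<Longrightarrow> d' \<in> Ext X C A \<Longrightarrow>
   push X C a (eadd X C A d d') = eadd X C A' (push X C a d) (push X C a d')"
  using biadditive unfolding biadditive_Ext_def by metis

lemma push_idt: "C \<in> Ob X \<Longrightarrow> A \<in> Ob X \<Longrightarrow> d \<in> Ext X C A \<Longrightarrow> push X C (idt X A) d = d"
  using biadditive unfolding biadditive_Ext_def by metis

lemma pull_in_Ext: "A \<in> Ob X \<Longrightarrow> c \<in> hom X C' C \<Longrightarrow> d \<in> Ext X C A \<Longrightarrow> pull X c A d \<in> Ext X C' A"
  using biadditive unfolding biadditive_Ext_def by metis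

lemma pull_madd:
  "A \<in> Ob X \<Longrightarrow> c \<in> hom X C' C \<Longrightarrow> c' \<in> hom X C' C \<Longrightarrow> d \<in> Ext X C A \<Longrightarrow>
   pull X (madd X c c') A d = eadd X C' A (pull X c A d) (pull X c' A d)"
  using biadditive unfolding biadditive_Ext_def by metis

lemma pull_cmp:
  "A \<in> Ob X \<Longrightarrow> c \<in> hom X C' C \<Longrightarrow> c' \<in> hom X C'' C' \<Longrightarrow> d \<in> Ext X C A \<Longrightarrow>
   pull X (cmp X c c') A d = pull X c' A (pull X c A d)"
  using biadditive unfolding biadditive_Ext_def by metis

lemma pull_idt: "C \<in> Ob X \<Longrightarrow> A \<in> Ob X \<Longrightarrow> d \<in> Ext X C A \<Longrightarrow> pull X (idt X C) A d = d"
  using biadditive unfolding biadditive_Ext_def by metis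

lemma push_pull:
  "a \<in> hom X A A' \<Longrightarrow> c \<in> hom X C' C \<Longrightarrow> d \<in> Ext X C A \<Longrightarrow>
   push X C' a (pull X c A d) = pull X c A' (push X C a d)"
  using biadditive unfolding biadditive_Ext_def by metis

lemma Ext_idem_eq_ezero:
  assumes C: "C \<in> Ob X" and A: "A \<in> Ob X" and u: "u \<in> Ext X C A" and idem: "eadd X C A u u = u"
  shows "u = ezero X C A"
proof -
  let ?add = "eadd X C A" and ?z = "ezero X C A"
  have group: "\<forall>d\<in>Ext X C A. \<forall>d'\<in>Ext X C A. \<forall>d''\<in>Ext X C A.
           ?add (?add d d') d'' = ?add d (?add d' d'')"
    "\<forall>d\<in>Ext X C A. \<forall>d'\<in>Ext X C A. ?add d d' = ?add d' d"
    "\<forall>d\<in>Ext X C A. ?add ?z d = d"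
    "\<forall>d\<in>Ext X C A. \<exists>d'\<in>Ext X C A. ?add d d' = ?z"
    using Ext_abelian_group C A by blast+
  obtain u' where u': "u' \<in> Ext X C A" "?add u u' = ?z" using group(4) u by blast
  have "?z = ?add (?add u u) u'" using idem u' by simp
  also have "\<dots> = ?add u ?z" using group(1) u u' by simp
  also have "\<dots> = u" using group(2,3) u ezero_in_Ext[OF C A] by metis
  finally show ?thesis by simp
qed

lemma push_ezero:
  assumes C: "C \<in> Ob X" and a: "a \<in> hom X A A'"
  shows "push X C a (ezero X C A) = ezero X C A'"
proof -
  have A: "A \<in> Ob X" and A': "A' \<in> Ob X" using hom_objects[OF a] by auto
  have z: "ezero X C A \<in> Ext X C A" using ezero_in_Ext[OF C A] .
  have "eadd X C A (ezero X C A) (ezero X C A) = ezero X C A"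
    using Ext_abelian_group C A z by blast
  then have "eadd X C A' (push X C a (ezero X C A)) (push X C a (ezero X C A)) = push X C a (ezero X C A)"
    using push_eadd[OF C a z z] by simp
  then show ?thesis using Ext_idem_eq_ezero[OF C A' push_in_Ext[OF C a z]] by simp
qed

lemma pull_mzero:
  assumes A: "A \<in> Ob X" and C: "C \<in> Ob X" and C': "C' \<in> Ob X" and d: "d \<in> Ext X C A"
  shows "pull X (mzero X C' C) A d = ezero X C' A"
proof -
  have z: "mzero X C' C \<in> hom X C' C" using mzero_hom[OF C' C] .
  have "pull X (mzero X C' C) A d = pull X (madd X (mzero X C' C) (mzero X C' C)) A d"
    using madd_mzero_left[OF z] by simp
  also have "\<dots> = eadd X C' A (pull X (mzero X C' C) A d) (pull X (mzero X C' C) A d)"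
    using pull_madd[OF A z z d] .
  finally show ?thesis using Ext_idem_eq_ezero[OF C' A pull_in_Ext[OF A z d]] by simp
qed

lemma rlz_exists: "C \<in> Ob X \<Longrightarrow> A \<in> Ob X \<Longrightarrow> d \<in> Ext X C A \<Longrightarrow> \<exists>x y. rlz X C A d x y"
  using realization unfolding realization_def by blast

lemma rlz_homs: "rlz X C A d x y \<Longrightarrow> \<exists>B\<in>Ob X. x \<in> hom X A B \<and> y \<in> hom X B C"
  using realization unfolding realization_def by (elim conjE) blast

lemma rlz_morphism_exists:
  "d \<in> Ext X C A \<Longrightarrow> d' \<in> Ext X C' A' \<Longrightarrow> a \<in> hom X A A' \<Longrightarrow> c \<in> hom X C C' \<Longrightarrow>
   push X C a d = pull X c A' d' \<Longrightarrow> rlz X C A d x y \<Longrightarrow> rlz X C' A' d' x' y' \<Longrightarrow>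
   \<exists>b\<in>hom X (tgt X x) (tgt X x'). cmp X b x = cmp X x' a \<and> cmp X y' b = cmp X c y"
  using realization unfolding realization_def by (elim conjE) meson

lemma etri_exists: "C \<in> Ob X \<Longrightarrow> A \<in> Ob X \<Longrightarrow> d \<in> Ext X C A \<Longrightarrow> \<exists>B x y. etri X A B C x y d"
  using rlz_exists rlz_homs unfolding etri_def by blast

lemma etri_morphism_exists:
  assumes "etri X A B C x y d" "etri X A' B' C' x' y' d'"
    and "a \<in> hom X A A'" "c \<in> hom X C C'" "push X C a d = pull X c A' d'"
  shows "\<exists>b\<in>hom X B B'. cmp X b x = cmp X x' a \<and> cmp X y' b = cmp X c y"
proof -
  have "tgt X x = B" "tgt X x' = B'" using assms(1,2) unfolding etri_def hom_def by auto
  then show ?thesis using rlz_morphism_exists assms unfolding etri_def by metis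
qed

lemma etri_split:
  assumes bp: "biproduct X A C S p1 p2 i1 i2"
  shows "etri X A S C i1 p2 (ezero X C A)"
proof -
  have homs: "i1 \<in> hom X A S" "p2 \<in> hom X S C" using bp unfolding biproduct_def by auto
  then have obs: "A \<in> Ob X" "C \<in> Ob X" "S \<in> Ob X" using hom_objects by blast+
  then have "rlz X C A (ezero X C A) i1 p2"
    using extriangulated bp unfolding extriangulated_def ET2_def by blast
  then show ?thesis using homs obs ezero_in_Ext unfolding etri_def by blast
qed

lemma ET3_morphism:
  "etri X A B C x y d \<Longrightarrow> etri X A' B' C' x' y' d' \<Longrightarrow> a \<in> hom X A A' \<Longrightarrow> b \<in> hom X B B' \<Longrightarrow>
   cmp X b x = cmp X x' a \<Longrightarrow> \<exists>c\<in>hom X C C'. cmp X c y = cmp X y' b \<and> push X C a d = pull X c A' d'"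
  using extriangulated unfolding extriangulated_def ET3_def by blast

lemma ET3op_morphism:
  "etri X A B C x y d \<Longrightarrow> etri X A' B' C' x' y' d' \<Longrightarrow> b \<in> hom X B B' \<Longrightarrow> c \<in> hom X C C' \<Longrightarrow>
   cmp X y' b = cmp X c y \<Longrightarrow> \<exists>a\<in>hom X A A'. cmp X b x = cmp X x' a \<and> push X C a d = pull X c A' d'"
  using extriangulated unfolding extriangulated_def ET3op_def by blast

text \<open>(ET3)^op applied to the split triangle A \<rightarrow> A \<oplus> B \<rightarrow> B and the square given by y
  yields y^* d as a push-forward of the zero extension.\<close>
lemma pull_deflation_eq_ezero:
  assumes t: "etri X A B C x y d"
  shows "pull X y A d = ezero X B A"
proof -
  have A: "A \<in> Ob X" and B: "B \<in> Ob X" and y: "y \<in> hom X B C" using t unfolding etri_def by auto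
  obtain S p1 p2 i1 i2 where bp: "biproduct X A B S p1 p2 i1 i2" using biproduct_exists[OF A B] by blast
  have p2: "p2 \<in> hom X S B" using bp unfolding biproduct_def by blast
  obtain a where "a \<in> hom X A A" "push X B a (ezero X B A) = pull X y A d"
    using ET3op_morphism[OF etri_split[OF bp] t p2 y] by blast
  then show ?thesis using push_ezero[OF B] by metis
qed

text \<open>Comparing with the split triangle A \<rightarrow> A \<oplus> P \<rightarrow> P lifts p
  through the deflation of \<theta>, and (ET3)^op turns that lift into f.\<close>
lemma push_of_pull_deflation_eq_ezero:
  assumes t: "etri X K P C k p g" and A: "A \<in> Ob X" and th: "th \<in> Ext X C A"
    and z: "pull X p A th = ezero X P A"
  shows "\<exists>f\<in>hom X K A. push X C f g = th"
proof -
  have P: "P \<in> Ob X" and C: "C \<in> Ob X" and p: "p \<in> hom X P C" using t unfolding etri_def by auto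
  obtain Y a b where tth: "etri X A Y C a b th" using etri_exists[OF C A th] by blast
  have b: "b \<in> hom X Y C" using tth unfolding etri_def by auto
  obtain S p1 p2 i1 i2 where bp: "biproduct X A P S p1 p2 i1 i2" using biproduct_exists[OF A P] by blast
  have i2: "i2 \<in> hom X P S" and p2: "p2 \<in> hom X S P" and p2i2: "cmp X p2 i2 = idt X P"
    using bp unfolding biproduct_def by auto
  have "push X P (idt X A) (ezero X P A) = pull X p A th"
    using push_idt[OF P A ezero_in_Ext[OF P A]] z by simp
  then obtain b' where b': "b' \<in> hom X S Y" "cmp X b b' = cmp X p p2"
    using etri_morphism_exists[OF etri_split[OF bp] tth idt_hom[OF A] p] by blast
  define q where "q = cmp X b' i2"
  have q: "q \<in> hom X P Y" unfolding q_def using cmp_hom[OF i2 b'(1)] .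
  have "cmp X b q = cmp X (cmp X p p2) i2" unfolding q_def using cmp_assoc[OF i2 b'(1) b] b'(2) by simp
  also have "\<dots> = p" using cmp_assoc[OF i2 p2 p] p2i2 cmp_idt_right[OF p] by simp
  finally have "cmp X b q = cmp X (idt X C) p" using cmp_idt_left[OF p] by simp
  then obtain f where "f \<in> hom X K A" "push X C f g = pull X (idt X C) A th"
    using ET3op_morphism[OF t tth q idt_hom[OF C]] by blast
  then show ?thesis using pull_idt[OF C A th] by auto
qed

lemma pull_of_push_inflation_eq_ezero:
  assumes t: "etri X K B C' e y d" and W: "W \<in> Ob X" and eps: "eps \<in> Ext X W K"
    and z: "push X W e eps = ezero X W B"
  shows "\<exists>h\<in>hom X W C'. pull X h K d = eps"
proof -
  have K: "K \<in> Ob X" and B: "B \<in> Ob X" and e: "e \<in> hom X K B" using t unfolding etri_def by auto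
  obtain Z u v where teps: "etri X K Z W u v eps" using etri_exists[OF W K eps] by blast
  have u: "u \<in> hom X K Z" using teps unfolding etri_def by auto
  obtain S p1 p2 i1 i2 where bp: "biproduct X B W S p1 p2 i1 i2" using biproduct_exists[OF B W] by blast
  have i1: "i1 \<in> hom X B S" and p1: "p1 \<in> hom X S B" and p1i1: "cmp X p1 i1 = idt X B"
    using bp unfolding biproduct_def by auto
  have "push X W e eps = pull X (idt X W) B (ezero X W B)"
    using pull_idt[OF W B ezero_in_Ext[OF W B]] z by simp
  then obtain w where w: "w \<in> hom X Z S" "cmp X w u = cmp X i1 e"
    using etri_morphism_exists[OF teps etri_split[OF bp] e idt_hom[OF W]] by blast
  define r where "r = cmp X p1 w"
  have r: "r \<in> hom X Z B" unfolding r_def using cmp_hom[OF w(1) p1] .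
  have "cmp X r u = cmp X p1 (cmp X i1 e)" unfolding r_def using cmp_assoc[OF u w(1) p1] w(2) by simp
  also have "\<dots> = e" using cmp_assoc[OF e i1 p1] p1i1 cmp_idt_left[OF e] by simp
  finally have "cmp X r u = cmp X e (idt X K)" using cmp_idt_right[OF e] by simp
  then obtain h where "h \<in> hom X W C'" "push X W (idt X K) eps = pull X h K d"
    using ET3_morphism[OF teps t idt_hom[OF K] r] by blast
  then show ?thesis using push_idt[OF W K eps] by auto
qed

end

locale extriangulated_subfunctor = extriangulated_category +
  fixes Fs :: "'o \<Rightarrow> 'o \<Rightarrow> 'e set"
  assumes additive_subfunctor: "additive_subfunctor X Fs"
begin

lemma ezero_in_F: "C \<in> Ob X \<Longrightarrow> A \<in> Ob X \<Longrightarrow> ezero X C A \<in> Fs C A"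
  using additive_subfunctor unfolding additive_subfunctor_def by blast

lemma eadd_in_F:
  "C \<in> Ob X \<Longrightarrow> A \<in> Ob X \<Longrightarrow> d \<in> Fs C A \<Longrightarrow> d' \<in> Fs C A \<Longrightarrow> eadd X C A d d' \<in> Fs C A"
  using additive_subfunctor unfolding additive_subfunctor_def by blast

lemma push_in_F: "C \<in> Ob X \<Longrightarrow> a \<in> hom X A A' \<Longrightarrow> d \<in> Fs C A \<Longrightarrow> push X C a d \<in> Fs C A'"
  using additive_subfunctor unfolding additive_subfunctor_def by blast

lemma pull_in_F: "A \<in> Ob X \<Longrightarrow> c \<in> hom X C' C \<Longrightarrow> d \<in> Fs C A \<Longrightarrow> pull X c A d \<in> Fs C' A"
  using additive_subfunctor unfolding additive_subfunctor_def by blast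

lemma PhI:
  assumes "f \<in> hom X B C" "\<And>A d. A \<in> Ob X \<Longrightarrow> d \<in> Ext X C A \<Longrightarrow> pull X f A d \<in> Fs B A"
  shows "f \<in> Ph X Fs"
  using assms unfolding Ph_def hom_def by auto

lemma PhD: "f \<in> Ph X Fs \<Longrightarrow> f \<in> hom X B C \<Longrightarrow> A \<in> Ob X \<Longrightarrow> d \<in> Ext X C A \<Longrightarrow> pull X f A d \<in> Fs B A"
  unfolding Ph_def hom_def by auto

lemma Ph_hom: "f \<in> Ph X Fs \<Longrightarrow> f \<in> hom X (src X f) (tgt X f)"
  unfolding Ph_def hom_def by auto

lemma Ph_postcomp:
  assumes f: "f \<in> Ph X Fs" "f \<in> hom X A B" and g: "g \<in> hom X B C"
  shows "cmp X g f \<in> Ph X Fs"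
proof (rule PhI[OF cmp_hom[OF f(2) g]])
  fix A' d assume A': "A' \<in> Ob X" and d: "d \<in> Ext X C A'"
  have "pull X f A' (pull X g A' d) \<in> Fs A A'" using PhD[OF f A' pull_in_Ext[OF A' g d]] .
  then show "pull X (cmp X g f) A' d \<in> Fs A A'" using pull_cmp[OF A' g f(2) d] by simp
qed

lemma Ph_precomp:
  assumes f: "f \<in> Ph X Fs" "f \<in> hom X B C" and g: "g \<in> hom X A B"
  shows "cmp X f g \<in> Ph X Fs"
proof (rule PhI[OF cmp_hom[OF g f(2)]])
  fix A' d assume A': "A' \<in> Ob X" and d: "d \<in> Ext X C A'"
  have "pull X g A' (pull X f A' d) \<in> Fs A A'" using pull_in_F[OF A' g PhD[OF f A' d]] .
  then show "pull X (cmp X f g) A' d \<in> Fs A A'" using pull_cmp[OF A' f(2) g d] by simp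
qed

lemma mzero_in_Ph:
  assumes A: "A \<in> Ob X" and B: "B \<in> Ob X"
  shows "mzero X A B \<in> Ph X Fs"
  using PhI[OF mzero_hom[OF A B]] pull_mzero[OF _ B A] ezero_in_F[OF A] by simp

lemma madd_in_Ph:
  assumes f: "f \<in> Ph X Fs" "f \<in> hom X A B" and g: "g \<in> Ph X Fs" "g \<in> hom X A B"
  shows "madd X f g \<in> Ph X Fs"
proof (rule PhI[OF madd_hom[OF f(2) g(2)]])
  fix A' d assume A': "A' \<in> Ob X" and d: "d \<in> Ext X B A'"
  show "pull X (madd X f g) A' d \<in> Fs A A'"
    using pull_madd[OF A' f(2) g(2) d] eadd_in_F[OF _ A' PhD[OF f A' d] PhD[OF g A' d]]
      hom_objects[OF f(2)] by simp
qed

lemma Ph_ideal: "ideal X (Ph X Fs)"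
  unfolding ideal_def
proof (intro conjI ballI allI impI)
  show "Ph X Fs \<subseteq> Mor X" unfolding Ph_def by blast
  show "mzero X A B \<in> Ph X Fs" if "A \<in> Ob X" "B \<in> Ob X" for A B
    using mzero_in_Ph that .
  show "madd X f g \<in> Ph X Fs" if "f \<in> hom X A B" "g \<in> hom X A B" "f \<in> Ph X Fs \<and> g \<in> Ph X Fs"
    for A B f g using madd_in_Ph that by blast
  show "cmp X g f \<in> Ph X Fs" if "f \<in> Ph X Fs" "g \<in> Mor X" "src X g = tgt X f" for f g
    using Ph_postcomp[OF that(1) Ph_hom[OF that(1)]] that(2,3) unfolding hom_def by simp
  show "cmp X f g \<in> Ph X Fs" if "f \<in> Ph X Fs" "g \<in> Mor X" "tgt X g = src X f" for f g
    using Ph_precomp[OF that(1) Ph_hom[OF that(1)]] that(2,3) unfolding hom_def by simp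
qed

lemma F_inj_in_perpE_Ph:
  assumes e: "e \<in> F_inj X Fs" "e \<in> hom X K B"
  shows "e \<in> perpE X (Ph X Fs)"
  unfolding perpE_def
proof (intro CollectI conjI ballI)
  show "e \<in> Mor X" using e(2) unfolding hom_def by blast
  have se: "src X e = K" "tgt X e = B" using e(2) unfolding hom_def by auto
  fix m d assume m: "m \<in> Ph X Fs" and d: "d \<in> Ext X (tgt X m) (src X e)"
  have K: "K \<in> Ob X" using hom_objects[OF e(2)] by blast
  have W: "src X m \<in> Ob X" using hom_objects[OF Ph_hom[OF m]] by blast
  have "pull X m K d \<in> Fs (src X m) K" using PhD[OF m Ph_hom[OF m] K] d se by simp
  then have "push X (src X m) e (pull X m K d) = ezero X (src X m) B"
    using e(1) W se unfolding F_inj_def by auto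
  then show "pull X m (tgt X e) (push X (tgt X m) e d) = ezero X (src X m) (tgt X e)"
    using push_pull[OF e(2) Ph_hom[OF m]] d se by simp
qed

lemma deflation_of_push_along_F_inj_in_Ph:
  assumes tp: "etri X K P C k p g" and p_proj: "\<forall>A\<in>Ob X. \<forall>d\<in>Ext X C A. pull X p A d = ezero X P A"
    and ti: "etri X K B C' e y dl" and dl: "dl \<in> Fs C' K" and e: "e \<in> F_inj X Fs"
    and tx: "etri X B W C x i (push X C e g)"
  shows "i \<in> Ph X Fs"
proof -
  have K: "K \<in> Ob X" and g: "g \<in> Ext X C K" using tp unfolding etri_def by auto
  have eh: "e \<in> hom X K B" using ti unfolding etri_def by auto
  have W: "W \<in> Ob X" and ih: "i \<in> hom X W C" using tx unfolding etri_def by auto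
  define eps where "eps = pull X i K g"
  have eps: "eps \<in> Ext X W K" unfolding eps_def using pull_in_Ext[OF K ih g] .
  have "push X W e eps = pull X i B (push X C e g)" unfolding eps_def using push_pull[OF eh ih g] .
  also have "\<dots> = ezero X W B" using pull_deflation_eq_ezero[OF tx] .
  finally obtain h where h: "h \<in> hom X W C'" "pull X h K dl = eps"
    using pull_of_push_inflation_eq_ezero[OF ti W eps] by blast
  have epsF: "eps \<in> Fs W K" using pull_in_F[OF K h(1) dl] h(2) by simp
  show ?thesis
  proof (rule PhI[OF ih])
    fix A th assume A: "A \<in> Ob X" and th: "th \<in> Ext X C A"
    obtain f where f: "f \<in> hom X K A" "push X C f g = th"
      using push_of_pull_deflation_eq_ezero[OF tp A th] p_proj A th by blast
    have "pull X i A th = push X W f eps" unfolding eps_def using push_pull[OF f(1) ih g] f(2) by simp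
    then show "pull X i A th \<in> Fs W A" using push_in_F[OF W f(1) epsF] by simp
  qed
qed

lemma special_precover_exists:
  assumes proj: "enough_projective_morphisms X" and inj: "enough_injective_morphisms X Fs"
    and C: "C \<in> Ob X"
  shows "\<exists>i. special_precover X (Ph X Fs) C i"
proof -
  obtain K P k p g where tp: "etri X K P C k p g"
    and p_proj: "\<forall>A\<in>Ob X. \<forall>d\<in>Ext X C A. pull X p A d = ezero X P A"
    using proj C unfolding enough_projective_morphisms_def by blast
  have K: "K \<in> Ob X" and g: "g \<in> Ext X C K" using tp unfolding etri_def by auto
  obtain B C' e y dl where ti: "etri X K B C' e y dl" and dl: "dl \<in> Fs C' K" and e: "e \<in> F_inj X Fs"
    using inj K unfolding enough_injective_morphisms_def by blast
  have B: "B \<in> Ob X" and eh: "e \<in> hom X K B" using ti unfolding etri_def by auto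
  have eg: "push X C e g \<in> Ext X C B" using push_in_Ext[OF C eh g] .
  obtain W x i where tx: "etri X B W C x i (push X C e g)" using etri_exists[OF C B eg] by blast
  have i: "i \<in> hom X W C" using tx unfolding etri_def by auto
  have morph: "push X C e g = pull X (idt X C) B (push X C e g)" using pull_idt[OF C B eg] by simp
  obtain b where "b \<in> hom X P W" "cmp X b k = cmp X x e" "cmp X i b = cmp X (idt X C) p"
    using etri_morphism_exists[OF tp tx eh idt_hom[OF C] morph] by blast
  moreover have "i \<in> Ph X Fs"
    using deflation_of_push_along_F_inj_in_Ph[OF tp p_proj ti dl e tx] .
  moreover have "src X i = W" "tgt X i = C" using i unfolding hom_def by auto
  ultimately have "special_precover X (Ph X Fs) C i"
    unfolding special_precover_def using tp tx eh morph F_inj_in_perpE_Ph[OF e eh] by fastforce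
  then show ?thesis by blast
qed

end

theorem theorem4p2:
  fixes X :: "('o,'m,'e) ecat" and Fs :: "'o \<Rightarrow> 'o \<Rightarrow> 'e set"
  assumes "extriangulated X"
    and "enough_projective_morphisms X"
    and "additive_subfunctor X Fs"
    and "enough_injective_morphisms X Fs"
  shows "special_precovering_ideal X (Ph X Fs)"
proof -
  interpret extriangulated_subfunctor X Fs
    using assms(1,3) by unfold_locales
  show ?thesis
    unfolding special_precovering_ideal_def
    using Ph_ideal special_precover_exists[OF assms(2,4)] by blast
qed

end
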